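(* Let $K>0$, let $\eta:[0,K]\to\mathbb{R}$ be a speed-density relation, let $T>0$, and let $k_0\in(0,K]$ be a density at which $\eta$ is differentiable; set $v_0=\eta(k_0)$. Consider Phillips' model $$k_t+(kv)_x=0,\qquad v_t+v v_x=\frac{\eta(k)-v}{T},$$ linearized about the equilibrium $(k_0,v_0)$, i.e. the linear system for perturbations $\kappa(t,x),\nu(t,x)$: $$\kappa_t+v_0\kappa_x+k_0\nu_x=0,\qquad \nu_t+v_0\nu_x=\frac{\eta'(k_0)\kappa-\nu}{T}.$$ Call this linearized system linearly stable if for every real $m\neq 0$ and every complex $\omega$ for which the system admits a solution $(\kappa,\nu)=(a,b)e^{i(mx-\omega t)}$ with $(a,b)\in\mathbb{C}^2\setminus\{(0,0)\}$, one has $\operatorname{Im}\omega<0$. Then the linearized system is not linearly stable (Phillips' model is linearly unstable): there exist a real $m\neq 0$, a complex $\omega$ with $\operatorname{Im}\omega\ge 0$, and $(a,b)\neq(0,0)$ such that $(a,b)e^{i(mx-\omega t)}$ solves the linearized system.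
   Context: $k(t,x)$ is traffic density, $v(t,x)$ is traffic speed, $K$ is the jam density, and $T$ is the relaxation time. *)

theory Defs
  imports "HOL-Analysis.Analysis"
begin

definition solves_linearized ::
  "real \<Rightarrow> real \<Rightarrow> real \<Rightarrow> real \<Rightarrow> (real \<Rightarrow> real \<Rightarrow> complex) \<Rightarrow> (real \<Rightarrow> real \<Rightarrow> complex) \<Rightarrow> bool" where
  "solves_linearized k0 v0 d T \<kappa> \<nu> \<longleftrightarrow>
     (\<forall>t x. \<exists>\<kappa>t \<kappa>x \<nu>t \<nu>x.
        ((\<lambda>s. \<kappa> s x) has_vector_derivative \<kappa>t) (at t) \<and>
        ((\<lambda>y. \<kappa> t y) has_vector_derivative \<kappa>x) (at x) \<and>
        ((\<lambda>s. \<nu> s x) has_vector_derivative \<nu>t) (at t) \<and>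
        ((\<lambda>y. \<nu> t y) has_vector_derivative \<nu>x) (at x) \<and>
        \<kappa>t + of_real v0 * \<kappa>x + of_real k0 * \<nu>x = 0 \<and>
        \<nu>t + of_real v0 * \<nu>x = (of_real d * \<kappa> t x - \<nu> t x) / of_real T)"

definition plane_wave :: "complex \<Rightarrow> real \<Rightarrow> complex \<Rightarrow> real \<Rightarrow> real \<Rightarrow> complex" where
  "plane_wave c m \<omega> t x = c * exp (\<i> * (of_real m * of_real x - \<omega> * of_real t))"

end

theory Submission
  imports Defs
begin

text \<open>Substituting the plane wave with frequency \<open>\<omega> = m v0 + \<sigma>\<close> turns the linearized system into the
  algebraic equations \<open>\<sigma> a = m k0 b\<close> and \<open>(1 - i \<sigma> T) b = d a\<close>; with \<open>b = 1\<close> they reduce to the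
  dispersion relation \<open>\<sigma> (1 - i \<sigma> T) = d m k0\<close>. For \<open>d = 0\<close> the root \<open>\<sigma> = 0\<close> is neutrally stable.
  Otherwise \<open>\<sigma> = (2 + i)/(3T)\<close> gives \<open>\<sigma> (1 - i \<sigma> T) = 10/(9T)\<close>, a positive real number, so it is a
  root with \<open>Im \<sigma> > 0\<close> for the wave number \<open>m = 10/(9 T d k0)\<close>.\<close>

lemma plane_wave_has_vector_derivative_time:
  "((\<lambda>s. plane_wave c m \<omega> s x) has_vector_derivative (- \<i> * \<omega> * plane_wave c m \<omega> t x)) (at t)"
proof -
  let ?g = "\<lambda>z. c * exp (\<i> * (of_real m * of_real x - \<omega> * z))"
  have "(?g has_field_derivative (- \<i> * \<omega> * ?g (of_real t))) (at (of_real t))"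
    by (auto intro!: derivative_eq_intros simp: algebra_simps)
  from has_vector_derivative_real_field[OF this] show ?thesis
    by (simp add: plane_wave_def)
qed

lemma plane_wave_has_vector_derivative_space:
  "((\<lambda>y. plane_wave c m \<omega> t y) has_vector_derivative (\<i> * of_real m * plane_wave c m \<omega> t x)) (at x)"
proof -
  let ?g = "\<lambda>z. c * exp (\<i> * (of_real m * z - \<omega> * of_real t))"
  have "(?g has_field_derivative (\<i> * of_real m * ?g (of_real x))) (at (of_real x))"
    by (auto intro!: derivative_eq_intros simp: algebra_simps)
  from has_vector_derivative_real_field[OF this] show ?thesis
    by (simp add: plane_wave_def)
qed

lemma plane_wave_solves_linearized:
  fixes \<sigma> :: complex
  assumes "\<omega> = of_real m * of_real v0 + \<sigma>" and "T \<noteq> 0"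
    and mass: "\<sigma> * a = of_real m * of_real k0 * b"
    and momentum: "(1 - \<i> * \<sigma> * of_real T) * b = of_real d * a"
  shows "solves_linearized k0 v0 d T (plane_wave a m \<omega>) (plane_wave b m \<omega>)"
  unfolding solves_linearized_def
proof (intro allI)
  fix t x
  define E where "E = exp (\<i> * (of_real m * of_real x - \<omega> * of_real t))"
  have waves: "plane_wave a m \<omega> t x = a * E" "plane_wave b m \<omega> t x = b * E"
    by (simp_all add: plane_wave_def E_def)
  have "- \<i> * \<omega> * (a * E) + of_real v0 * (\<i> * of_real m * (a * E)) + of_real k0 * (\<i> * of_real m * (b * E))
      = - \<i> * E * (\<sigma> * a - of_real m * of_real k0 * b)"
    using \<open>\<omega> = _\<close> by (simp add: algebra_simps)
  then have mass_wave:
    "- \<i> * \<omega> * (a * E) + of_real v0 * (\<i> * of_real m * (a * E)) + of_real k0 * (\<i> * of_real m * (b * E)) = 0"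
    using mass by simp
  have "of_real T * (- \<i> * \<omega> * (b * E) + of_real v0 * (\<i> * of_real m * (b * E)))
      = E * ((1 - \<i> * \<sigma> * of_real T) * b - b)"
    using \<open>\<omega> = _\<close> by (simp add: algebra_simps)
  also have "\<dots> = of_real d * (a * E) - b * E"
    unfolding momentum by (simp add: algebra_simps)
  finally have momentum_wave:
    "- \<i> * \<omega> * (b * E) + of_real v0 * (\<i> * of_real m * (b * E)) = (of_real d * (a * E) - b * E) / of_real T"
    using \<open>T \<noteq> 0\<close> by (simp add: eq_divide_eq mult.commute)
  show "\<exists>\<kappa>t \<kappa>x \<nu>t \<nu>x.
        ((\<lambda>s. plane_wave a m \<omega> s x) has_vector_derivative \<kappa>t) (at t) \<and>
        ((\<lambda>y. plane_wave a m \<omega> t y) has_vector_derivative \<kappa>x) (at x) \<and>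
        ((\<lambda>s. plane_wave b m \<omega> s x) has_vector_derivative \<nu>t) (at t) \<and>
        ((\<lambda>y. plane_wave b m \<omega> t y) has_vector_derivative \<nu>x) (at x) \<and>
        \<kappa>t + of_real v0 * \<kappa>x + of_real k0 * \<nu>x = 0 \<and>
        \<nu>t + of_real v0 * \<nu>x = (of_real d * plane_wave a m \<omega> t x - plane_wave b m \<omega> t x) / of_real T"
    using plane_wave_has_vector_derivative_time[of a m \<omega> x t]
      plane_wave_has_vector_derivative_space[of a m \<omega> t x]
      plane_wave_has_vector_derivative_time[of b m \<omega> x t]
      plane_wave_has_vector_derivative_space[of b m \<omega> t x]
      mass_wave momentum_wave
    unfolding waves by blast
qed

lemma phillips_unstable_root:
  fixes T :: real
  assumes "T \<noteq> 0"
  defines "\<sigma> \<equiv> (2 + \<i>) / (3 * of_real T)"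
  shows "\<sigma> * (1 - \<i> * \<sigma> * of_real T) = of_real (10 / (9 * T))"
  using assms by (simp add: field_simps complex_eq_iff power2_eq_square)

theorem theorem2p2:
  fixes K T k0 d :: real and \<eta> :: "real \<Rightarrow> real"
  assumes "K > 0" and "T > 0" and "k0 \<in> {0<..K}"
    and "(\<eta> has_real_derivative d) (at k0 within {0..K})"
  shows "\<exists>m \<omega> a b. m \<noteq> 0 \<and> Im \<omega> \<ge> 0 \<and> (a, b) \<noteq> (0, 0) \<and>
           solves_linearized k0 (\<eta> k0) d T (plane_wave a m \<omega>) (plane_wave b m \<omega>)"
proof (cases "d = 0")
  case True
  have "solves_linearized k0 (\<eta> k0) d T (plane_wave 1 1 (of_real (\<eta> k0))) (plane_wave 0 1 (of_real (\<eta> k0)))"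
    using \<open>T > 0\<close> True by (intro plane_wave_solves_linearized[where \<sigma> = 0]) simp_all
  then show ?thesis
    by (intro exI[of _ 1] exI[of _ "of_real (\<eta> k0)"] exI[of _ 1] exI[of _ 0]) simp
next
  case False
  define \<sigma> where "\<sigma> = (2 + \<i>) / (3 * of_real T)"
  define m where "m = 10 / (9 * T * d * k0)"
  define a where "a = of_real m * of_real k0 / \<sigma>"
  have "k0 > 0" using \<open>k0 \<in> {0<..K}\<close> by simp
  then have "m \<noteq> 0" and dispersion: "of_real (d * m * k0) = (of_real (10 / (9 * T)) :: complex)"
    using False \<open>T > 0\<close> by (simp_all add: m_def)
  have "\<sigma> \<noteq> 0" "Im \<sigma> \<ge> 0"
    using \<open>T > 0\<close> by (simp_all add: \<sigma>_def complex_eq_iff)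
  have "\<sigma> * a = of_real m * of_real k0 * 1"
    using \<open>\<sigma> \<noteq> 0\<close> by (simp add: a_def)
  moreover have "(1 - \<i> * \<sigma> * of_real T) * 1 = of_real d * a"
  proof -
    have "of_real d * a = of_real (d * m * k0) / \<sigma>"
      by (simp add: a_def)
    also have "\<dots> = \<sigma> * (1 - \<i> * \<sigma> * of_real T) / \<sigma>"
      unfolding dispersion \<sigma>_def using \<open>T > 0\<close> by (subst phillips_unstable_root) simp_all
    finally show ?thesis using \<open>\<sigma> \<noteq> 0\<close> by simp
  qed
  ultimately have "solves_linearized k0 (\<eta> k0) d T
      (plane_wave a m (of_real m * of_real (\<eta> k0) + \<sigma>)) (plane_wave 1 m (of_real m * of_real (\<eta> k0) + \<sigma>))"
    using \<open>T > 0\<close> by (intro plane_wave_solves_linearized) simp_all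
  then show ?thesis using \<open>m \<noteq> 0\<close> \<open>Im \<sigma> \<ge> 0\<close>
    by (intro exI[of _ m] exI[of _ "of_real m * of_real (\<eta> k0) + \<sigma>"] exI[of _ a] exI[of _ 1]) simp
qed

end
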